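(* Let $G$ be a tree on $n\geq 2$ vertices with Randi\'c index $R$ and radius $r$. If $G$ is a path with an even number of vertices, greater than $2$, then \[R-r=\sqrt 2-\frac{3}{2};\] otherwise \[R-r\geq 0,\] with equality for the path on $2$ vertices.
   Context: The Randi\'c index is $R(G)=\sum_{uv\in E(G)}\frac{1}{\sqrt{d_ud_v}}$, where $d_v$ is the degree of $v$. The radius is the minimum over vertices $v$ of the maximum distance from $v$ to another vertex. *)

theory Defs
  imports Complex_Main
begin

definition simple_graph :: "'a set \<Rightarrow> ('a \<Rightarrow> 'a \<Rightarrow> bool) \<Rightarrow> bool" where
  "simple_graph V E \<longleftrightarrow> finite V \<and> (\<forall>u v. E u v \<longrightarrow> u \<in> V \<and> v \<in> V)
     \<and> (\<forall>u v. E u v \<longrightarrow> E v u) \<and> (\<forall>v. \<not> E v v)"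

definition edges :: "'a set \<Rightarrow> ('a \<Rightarrow> 'a \<Rightarrow> bool) \<Rightarrow> 'a set set" where
  "edges V E = {{u, v} | u v. u \<in> V \<and> v \<in> V \<and> E u v}"

definition degree :: "'a set \<Rightarrow> ('a \<Rightarrow> 'a \<Rightarrow> bool) \<Rightarrow> 'a \<Rightarrow> nat" where
  "degree V E v = card {u \<in> V. E v u}"

definition adj_rel :: "'a set \<Rightarrow> ('a \<Rightarrow> 'a \<Rightarrow> bool) \<Rightarrow> ('a \<times> 'a) set" where
  "adj_rel V E = {(u, v). u \<in> V \<and> v \<in> V \<and> E u v}"

definition connected_graph :: "'a set \<Rightarrow> ('a \<Rightarrow> 'a \<Rightarrow> bool) \<Rightarrow> bool" where
  "connected_graph V E \<longleftrightarrow> (\<forall>u\<in>V. \<forall>v\<in>V. (u, v) \<in> (adj_rel V E)\<^sup>*)"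

definition has_cycle :: "'a set \<Rightarrow> ('a \<Rightarrow> 'a \<Rightarrow> bool) \<Rightarrow> bool" where
  "has_cycle V E \<longleftrightarrow> (\<exists>xs. length xs \<ge> 3 \<and> distinct xs \<and> set xs \<subseteq> V
      \<and> (\<forall>i. Suc i < length xs \<longrightarrow> E (xs ! i) (xs ! Suc i))
      \<and> E (last xs) (hd xs))"

definition is_tree :: "'a set \<Rightarrow> ('a \<Rightarrow> 'a \<Rightarrow> bool) \<Rightarrow> bool" where
  "is_tree V E \<longleftrightarrow> simple_graph V E \<and> V \<noteq> {} \<and> connected_graph V E \<and> \<not> has_cycle V E"

definition is_path_graph :: "'a set \<Rightarrow> ('a \<Rightarrow> 'a \<Rightarrow> bool) \<Rightarrow> bool" where
  "is_path_graph V E \<longleftrightarrow> (\<exists>xs. distinct xs \<and> set xs = V \<and>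
      (\<forall>u\<in>V. \<forall>v\<in>V. E u v \<longleftrightarrow>
          (\<exists>i. Suc i < length xs \<and> {xs ! i, xs ! Suc i} = {u, v})))"

definition randic :: "'a set \<Rightarrow> ('a \<Rightarrow> 'a \<Rightarrow> bool) \<Rightarrow> real" where
  "randic V E = (\<Sum>e\<in>edges V E. 1 / sqrt (\<Prod>x\<in>e. real (degree V E x)))"

definition dist :: "'a set \<Rightarrow> ('a \<Rightarrow> 'a \<Rightarrow> bool) \<Rightarrow> 'a \<Rightarrow> 'a \<Rightarrow> nat" where
  "dist V E u v = (LEAST k. (u, v) \<in> (adj_rel V E) ^^ k)"

definition eccentricity :: "'a set \<Rightarrow> ('a \<Rightarrow> 'a \<Rightarrow> bool) \<Rightarrow> 'a \<Rightarrow> nat" where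
  "eccentricity V E v = Max (dist V E v ` V)"

definition radius :: "'a set \<Rightarrow> ('a \<Rightarrow> 'a \<Rightarrow> bool) \<Rightarrow> nat" where
  "radius V E = Min (eccentricity V E ` V)"

end

theory Submission
  imports Defs
begin

text \<open>
  For the path on n vertices one computes directly R = sqrt 2 + (n - 3) / 2 (for n \<ge> 3) and
  r = n div 2. Any other tree T has a leaf u off a longest path P (with |P| vertices): take a
  vertex off P farthest from an end of P. The midpoint of P shows 2 r(T) \<le> |P|, while the ends
  of P, still present in T - u, are at distance |P| - 1 \<le> 2 r(T - u); hence r(T) \<le> r(T - u).
  If k is the degree of the neighbour w of u in T - u, the deletion removes the edge uw of weight
  1 / sqrt (k + 1) and raises each of the k other weights at w by at most
  1 / sqrt k - 1 / sqrt (k + 1), so R(T) - R(T - u) \<ge> sqrt (k + 1) - sqrt k \<ge> 0. By induction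
  R - r \<ge> 0; the only delicate case is T - u an even path, where k \<le> 2 and
  sqrt 3 - sqrt 2 \<ge> 3 / 2 - sqrt 2 pays for its deficit.
\<close>

section \<open>Walks and distances\<close>

lemma simple_graph_sym: "simple_graph V E \<Longrightarrow> E x y \<Longrightarrow> E y x"
  by (simp add: simple_graph_def)

lemma simple_graph_vertices: "simple_graph V E \<Longrightarrow> E x y \<Longrightarrow> x \<in> V \<and> y \<in> V"
  by (simp add: simple_graph_def)

lemma simple_graph_irrefl: "simple_graph V E \<Longrightarrow> \<not> E x x"
  by (simp add: simple_graph_def)

lemma simple_graph_finite: "simple_graph V E \<Longrightarrow> finite V"
  by (simp add: simple_graph_def)

fun walk :: "('a \<Rightarrow> 'a \<Rightarrow> bool) \<Rightarrow> 'a list \<Rightarrow> bool" where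
  "walk E [] = True"
| "walk E [x] = True"
| "walk E (x # y # xs) \<longleftrightarrow> E x y \<and> walk E (y # xs)"

lemma walk_Cons: "walk E (x # xs) \<longleftrightarrow> walk E xs \<and> (xs \<noteq> [] \<longrightarrow> E x (hd xs))"
  by (cases xs) auto

lemma walk_append:
  "walk E (xs @ ys) \<longleftrightarrow> walk E xs \<and> walk E ys \<and> (xs \<noteq> [] \<longrightarrow> ys \<noteq> [] \<longrightarrow> E (last xs) (hd ys))"
  by (induction xs) (auto simp: walk_Cons)

lemma walk_rev:
  assumes "\<And>x y. E x y \<Longrightarrow> E y x"
  shows "walk E (rev xs) \<longleftrightarrow> walk E xs"
  by (induction xs) (auto simp: walk_append walk_Cons hd_rev last_rev intro: assms)

lemma walk_iff_nth: "walk E xs \<longleftrightarrow> (\<forall>i. Suc i < length xs \<longrightarrow> E (xs ! i) (xs ! Suc i))"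
  by (induction E xs rule: walk.induct) (auto simp: less_Suc_eq_0_disj)

lemma walk_mono: "walk E xs \<Longrightarrow> (\<And>x y. E x y \<Longrightarrow> F x y) \<Longrightarrow> walk F xs"
  by (induction E xs rule: walk.induct) auto

lemma walk_take: "walk E xs \<Longrightarrow> walk E (take n xs)"
  by (metis append_take_drop_id walk_append)

lemma walk_drop: "walk E xs \<Longrightarrow> walk E (drop n xs)"
  by (metis append_take_drop_id walk_append)

lemma walk_of_relpow:
  assumes "(x, y) \<in> adj_rel V E ^^ k" and "x \<in> V"
  obtains xs where "walk E xs" "length xs = Suc k" "hd xs = x" "last xs = y" "set xs \<subseteq> V"
proof -
  have "\<exists>xs. walk E xs \<and> length xs = Suc k \<and> hd xs = x \<and> last xs = y \<and> set xs \<subseteq> V"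
    using assms(1)
  proof (induction k arbitrary: y)
    case 0
    then show ?case using assms(2) by (intro exI[of _ "[x]"]) auto
  next
    case (Suc k)
    then obtain z where z: "(x, z) \<in> adj_rel V E ^^ k" "(z, y) \<in> adj_rel V E"
      by (meson relpow_Suc_E)
    with Suc.IH obtain xs where "walk E xs" "length xs = Suc k" "hd xs = x" "last xs = z" "set xs \<subseteq> V"
      by blast
    with z(2) show ?case
      by (intro exI[of _ "xs @ [y]"]) (auto simp: walk_append adj_rel_def hd_append)
  qed
  then show ?thesis using that by blast
qed

lemma relpow_of_walk:
  "walk E xs \<Longrightarrow> xs \<noteq> [] \<Longrightarrow> set xs \<subseteq> V \<Longrightarrow> (hd xs, last xs) \<in> adj_rel V E ^^ (length xs - 1)"
proof (induction xs rule: rev_induct)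
  case (snoc y xs)
  show ?case
  proof (cases "xs = []")
    case False
    with snoc have "(hd xs, last xs) \<in> adj_rel V E ^^ (length xs - 1)" "(last xs, y) \<in> adj_rel V E"
      by (auto simp: walk_append adj_rel_def)
    with False show ?thesis by (cases xs) (auto simp: relpow_Suc_I)
  qed simp
qed simp

lemma dist_le_relpow: "(x, y) \<in> adj_rel V E ^^ k \<Longrightarrow> dist V E x y \<le> k"
  unfolding dist_def by (rule Least_le)

lemma relpow_dist: "(x, y) \<in> (adj_rel V E)\<^sup>* \<Longrightarrow> (x, y) \<in> adj_rel V E ^^ dist V E x y"
  unfolding dist_def rtrancl_power by (rule LeastI_ex)

lemma dist_walk_le:
  "walk E xs \<Longrightarrow> xs \<noteq> [] \<Longrightarrow> set xs \<subseteq> V \<Longrightarrow> dist V E (hd xs) (last xs) \<le> length xs - 1"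
  by (rule dist_le_relpow[OF relpow_of_walk])

lemma dist_nth_le:
  assumes "walk E xs" "set xs \<subseteq> V" "i \<le> j" "j < length xs"
  shows "dist V E (xs ! i) (xs ! j) \<le> j - i"
proof -
  let ?ys = "take (Suc (j - i)) (drop i xs)"
  have "walk E ?ys" using assms(1) by (simp add: walk_take walk_drop)
  moreover have "?ys \<noteq> []" "set ?ys \<subseteq> V" using assms by (auto dest: in_set_takeD in_set_dropD)
  ultimately have "dist V E (hd ?ys) (last ?ys) \<le> length ?ys - 1" by (rule dist_walk_le)
  moreover have "hd ?ys = xs ! i" "last ?ys = xs ! j" "length ?ys = Suc (j - i)"
    using assms(3,4) by (auto simp: hd_take hd_drop_conv_nth last_conv_nth)
  ultimately show ?thesis by (simp only:)
qed

lemma dist_le_dist_subgraph: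
  assumes "V' \<subseteq> V" "\<And>x y. E' x y \<Longrightarrow> E x y" "(x, y) \<in> (adj_rel V' E')\<^sup>*" "x \<in> V'"
  shows "dist V E x y \<le> dist V' E' x y"
proof -
  obtain xs where "walk E' xs" "length xs = Suc (dist V' E' x y)" "hd xs = x" "last xs = y" "set xs \<subseteq> V'"
    using walk_of_relpow[OF relpow_dist[OF assms(3)] assms(4)] .
  moreover have "walk E xs" using \<open>walk E' xs\<close> assms(2) by (rule walk_mono)
  moreover have "xs \<noteq> []" "set xs \<subseteq> V" using calculation assms(1) by auto
  ultimately show ?thesis using dist_walk_le[of E xs V] by simp
qed

lemma connected_graph_rtrancl:
  "connected_graph V E \<Longrightarrow> x \<in> V \<Longrightarrow> y \<in> V \<Longrightarrow> (x, y) \<in> (adj_rel V E)\<^sup>*"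
  by (simp add: connected_graph_def)

lemma dist_triangle:
  assumes "connected_graph V E" "x \<in> V" "y \<in> V" "z \<in> V"
  shows "dist V E x z \<le> dist V E x y + dist V E y z"
proof -
  have "(x, y) \<in> adj_rel V E ^^ dist V E x y" "(y, z) \<in> adj_rel V E ^^ dist V E y z"
    using relpow_dist connected_graph_rtrancl assms by metis+
  then show ?thesis by (intro dist_le_relpow) (auto simp: relpow_add)
qed

lemma dist_sym:
  assumes G: "simple_graph V E" "connected_graph V E" and "x \<in> V" "y \<in> V"
  shows "dist V E x y = dist V E y x"
proof -
  have le: "dist V E b a \<le> dist V E a b" if ab: "a \<in> V" "b \<in> V" for a b
  proof -
    obtain xs where xs: "walk E xs" "length xs = Suc (dist V E a b)" "hd xs = a" "last xs = b" "set xs \<subseteq> V"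
      using walk_of_relpow[OF relpow_dist[OF connected_graph_rtrancl[OF G(2) ab]] ab(1)] .
    have "walk E (rev xs)" using walk_rev[of E xs, OF simple_graph_sym[OF G(1)]] xs(1) by simp
    moreover have "rev xs \<noteq> []" "set (rev xs) \<subseteq> V" using xs by auto
    ultimately show ?thesis using dist_walk_le[of E "rev xs" V] xs by (simp add: hd_rev last_rev)
  qed
  show ?thesis using le[of x y] le[of y x] assms by simp
qed

definition simple_path :: "'a set \<Rightarrow> ('a \<Rightarrow> 'a \<Rightarrow> bool) \<Rightarrow> 'a list \<Rightarrow> bool" where
  "simple_path V E xs \<longleftrightarrow> walk E xs \<and> distinct xs \<and> set xs \<subseteq> V \<and> xs \<noteq> []"

lemma simple_path_dist_le: "simple_path V E xs \<Longrightarrow> dist V E (hd xs) (last xs) \<le> length xs - 1"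
  unfolding simple_path_def by (blast intro: dist_walk_le)

lemma simple_path_rev: "simple_graph V E \<Longrightarrow> simple_path V E xs \<Longrightarrow> simple_path V E (rev xs)"
  unfolding simple_path_def using walk_rev[of E xs] simple_graph_sym[of V E] by auto

lemma simple_path_take: "simple_path V E xs \<Longrightarrow> 0 < n \<Longrightarrow> simple_path V E (take n xs)"
  unfolding simple_path_def by (auto simp: walk_take dest: in_set_takeD)

lemma simple_path_drop: "simple_path V E xs \<Longrightarrow> n < length xs \<Longrightarrow> simple_path V E (drop n xs)"
  unfolding simple_path_def by (auto simp: walk_drop dest: in_set_dropD)

lemma simple_path_segment:
  assumes "simple_path V E xs" "i \<le> j" "j < length xs"
  shows "simple_path V E (take (Suc (j - i)) (drop i xs))"
  using assms by (intro simple_path_take simple_path_drop) auto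

lemma simple_path_snoc:
  "simple_path V E xs \<Longrightarrow> y \<in> V \<Longrightarrow> y \<notin> set xs \<Longrightarrow> E (last xs) y \<Longrightarrow> simple_path V E (xs @ [y])"
  by (auto simp: simple_path_def walk_append)

lemma simple_path_glue:
  assumes "simple_path V E (xs @ [z])" "simple_path V E (z # ys)" "set xs \<inter> set (z # ys) = {}"
  shows "simple_path V E (xs @ z # ys)"
  using assms by (auto simp: simple_path_def walk_append walk_Cons)

lemma simple_path_edge: "simple_graph V E \<Longrightarrow> E x y \<Longrightarrow> simple_path V E [x, y]"
  using simple_graph_irrefl simple_graph_vertices by (fastforce simp: simple_path_def)

lemma simple_path_length_le_card: "finite V \<Longrightarrow> simple_path V E xs \<Longrightarrow> length xs \<le> card V"
  unfolding simple_path_def by (metis card_mono distinct_card)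

lemma shortest_simple_path:
  assumes "(x, y) \<in> (adj_rel V E)\<^sup>*" "x \<in> V"
  obtains xs where "simple_path V E xs" "length xs = Suc (dist V E x y)" "hd xs = x" "last xs = y"
proof -
  obtain xs where xs: "walk E xs" "length xs = Suc (dist V E x y)" "hd xs = x" "last xs = y" "set xs \<subseteq> V"
    using walk_of_relpow[OF relpow_dist[OF assms(1)] assms(2)] .
  have "distinct xs"
  proof (rule ccontr)
    assume "\<not> distinct xs"
    then obtain as z bs cs where eq: "xs = as @ [z] @ bs @ [z] @ cs"
      using not_distinct_decomp by blast
    let ?ys = "as @ z # cs"
    have "walk E ?ys" using xs(1) unfolding eq by (auto simp: walk_append walk_Cons)
    moreover have "?ys \<noteq> []" "set ?ys \<subseteq> V" "hd ?ys = x" "last ?ys = y"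
      using xs(3-5) unfolding eq by (auto simp: hd_append)
    ultimately have "dist V E x y \<le> length ?ys - 1" using dist_walk_le by metis
    then show False using xs(2) unfolding eq by simp
  qed
  then show ?thesis using xs by (intro that) (auto simp: simple_path_def)
qed

section \<open>Trees\<close>

lemma has_cycle_iff_walk:
  "has_cycle V E \<longleftrightarrow>
     (\<exists>xs. 3 \<le> length xs \<and> distinct xs \<and> set xs \<subseteq> V \<and> walk E xs \<and> E (last xs) (hd xs))"
  by (simp only: has_cycle_def walk_iff_nth)

lemma has_cycle_of_two_paths:
  assumes G: "simple_graph V E"
    and P: "walk E (a # xs @ [z])" and Q: "walk E (a # ys @ [z])"
    and distinct_cycle: "distinct (a # xs @ z # rev ys)" and V: "set (a # xs @ z # ys) \<subseteq> V"
    and nonempty: "xs \<noteq> [] \<or> ys \<noteq> []"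
  shows "has_cycle V E"
proof -
  let ?C = "a # xs @ z # rev ys"
  have "walk E (rev (a # ys @ [z]))"
    using Q walk_rev[of E "a # ys @ [z]", OF simple_graph_sym[OF G]] by (simp only:)
  then have reversed: "walk E (z # rev ys @ [a])" by simp
  have "walk E ((a # xs) @ [z])" using P by simp
  then have front: "walk E (a # xs)" "E (last (a # xs)) z"
    by (simp_all only: walk_append) simp_all
  have "walk E ((a # xs) @ (z # rev ys @ [a]))"
    using front reversed by (simp only: walk_append) simp
  then have "walk E (?C @ [a])" by simp
  then have "walk E ?C" "E (last ?C) (hd ?C)"
    by (simp_all only: walk_append) simp_all
  moreover have "3 \<le> length ?C" using nonempty by (cases xs; cases ys) auto
  ultimately show ?thesis unfolding has_cycle_iff_walk using distinct_cycle V by (intro exI[of _ ?C]) auto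
qed

lemma acyclic_simple_path_unique:
  assumes G: "simple_graph V E" "\<not> has_cycle V E"
  shows "simple_path V E P \<Longrightarrow> simple_path V E Q \<Longrightarrow> hd P = hd Q \<Longrightarrow> last P = last Q \<Longrightarrow> P = Q"
proof (induction P arbitrary: Q)
  case Nil
  then show ?case by (simp add: simple_path_def)
next
  case (Cons a P)
  obtain Q' where Q: "Q = a # Q'" using Cons.prems by (cases Q) (auto simp: simple_path_def)
  have dP: "distinct (a # P)" and dQ: "distinct (a # Q')"
    using Cons.prems Q by (auto simp: simple_path_def)
  have last_eq_hd: "last (a # L) = a \<longleftrightarrow> L = []" if "distinct (a # L)" for L
    using that by (cases L rule: rev_cases) auto
  have "P = [] \<longleftrightarrow> Q' = []"
    using Cons.prems(4) Q last_eq_hd[OF dP] last_eq_hd[OF dQ] by simp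
  moreover have "P = Q'" if "P \<noteq> []" "Q' \<noteq> []"
  proof (cases "hd P = hd Q'")
    case True
    have "simple_path V E P" using simple_path_drop[OF Cons.prems(1), of 1] that by simp
    moreover have "simple_path V E Q'" using simple_path_drop[OF Cons.prems(2), of 1] Q that by simp
    ultimately show ?thesis using True Cons.prems(4) Q that by (intro Cons.IH) auto
  next
    case False
    have "last Q' \<in> set P" using Cons.prems(4) Q that by (metis last_ConsR last_in_set)
    then have "\<exists>v\<in>set Q'. v \<in> set P" using that(2) last_in_set by blast
    then obtain Q1 z Q2 where Q': "Q' = Q1 @ z # Q2" and "z \<in> set P"
      and Q1: "\<forall>v\<in>set Q1. v \<notin> set P"
      using split_list_first_prop[of Q' "\<lambda>v. v \<in> set P"] by blast
    obtain P1 P2 where P: "P = P1 @ z # P2" using \<open>z \<in> set P\<close> split_list by metis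
    have "walk E ((a # P1 @ [z]) @ P2)" "walk E ((a # Q1 @ [z]) @ Q2)"
      using Cons.prems(1,2) unfolding Q Q' P simple_path_def by simp_all
    then have "walk E (a # P1 @ [z])" "walk E (a # Q1 @ [z])"
      by (simp_all only: walk_append)
    moreover have "distinct (a # P1 @ z # rev Q1)" using dP dQ Q1 unfolding P Q' by auto
    moreover have "set (a # P1 @ z # Q1) \<subseteq> V"
      using Cons.prems(1,2) unfolding Q Q' P simple_path_def by auto
    moreover have "P1 \<noteq> [] \<or> Q1 \<noteq> []" using False unfolding P Q' by auto
    ultimately have "has_cycle V E" by (rule has_cycle_of_two_paths[OF G(1)])
    then show ?thesis using G(2) by blast
  qed
  ultimately have "P = Q'" by blast
  then show ?case using Q by simp
qed

lemma tree_dist_simple_path: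
  assumes T: "is_tree V E" and P: "simple_path V E P"
  shows "dist V E (hd P) (last P) = length P - 1"
proof -
  have G: "simple_graph V E" "connected_graph V E" "\<not> has_cycle V E"
    using T by (simp_all add: is_tree_def)
  have ends: "hd P \<in> V" "last P \<in> V" using P by (auto simp: simple_path_def)
  obtain Q where Q: "simple_path V E Q" "length Q = Suc (dist V E (hd P) (last P))"
      "hd Q = hd P" "last Q = last P"
    using shortest_simple_path[OF connected_graph_rtrancl[OF G(2) ends] ends(1)] .
  have "Q = P" using acyclic_simple_path_unique[OF G(1,3) Q(1) P Q(3,4)] .
  then show ?thesis using Q(2) by simp
qed

lemma tree_dist_nth:
  assumes T: "is_tree V E" and P: "simple_path V E P" and "i \<le> j" "j < length P"
  shows "dist V E (P ! i) (P ! j) = j - i"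
proof -
  let ?S = "take (Suc (j - i)) (drop i P)"
  have "dist V E (hd ?S) (last ?S) = length ?S - 1"
    using tree_dist_simple_path[OF T simple_path_segment[OF P]] assms(3,4) by blast
  moreover have "hd ?S = P ! i" "last ?S = P ! j" "length ?S = Suc (j - i)"
    using assms(3,4) by (auto simp: hd_take hd_drop_conv_nth last_conv_nth)
  ultimately show ?thesis by (metis diff_Suc_1)
qed

lemma tree_simple_path_no_chord:
  assumes T: "is_tree V E" and P: "simple_path V E P"
    and "i < j" "j < length P" and edge: "E (P ! i) (P ! j)"
  shows "j = Suc i"
proof -
  have "set [P ! i, P ! j] \<subseteq> V" using P assms(3,4) by (auto simp: simple_path_def)
  then have "dist V E (P ! i) (P ! j) \<le> 1" using dist_walk_le[of E "[P ! i, P ! j]" V] edge by simp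
  moreover have "dist V E (P ! i) (P ! j) = j - i" using tree_dist_nth[OF T P] assms(3,4) by simp
  ultimately show ?thesis using assms(3) by simp
qed

section \<open>Path graphs\<close>

definition path_order :: "'a set \<Rightarrow> ('a \<Rightarrow> 'a \<Rightarrow> bool) \<Rightarrow> 'a list \<Rightarrow> bool" where
  "path_order V E xs \<longleftrightarrow> distinct xs \<and> set xs = V \<and>
     (\<forall>u\<in>V. \<forall>v\<in>V. E u v \<longleftrightarrow> (\<exists>i. Suc i < length xs \<and> {xs ! i, xs ! Suc i} = {u, v}))"

lemma is_path_graph_iff_path_order: "is_path_graph V E \<longleftrightarrow> (\<exists>xs. path_order V E xs)"
  unfolding is_path_graph_def path_order_def ..

lemma path_order_iff_adj:
  assumes "distinct xs" "set xs = V"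
  shows "path_order V E xs \<longleftrightarrow>
    (\<forall>i<length xs. \<forall>j<length xs. E (xs ! i) (xs ! j) \<longleftrightarrow> j = Suc i \<or> i = Suc j)"
proof -
  have consecutive: "(\<exists>t. Suc t < length xs \<and> {xs ! t, xs ! Suc t} = {xs ! i, xs ! j})
      \<longleftrightarrow> j = Suc i \<or> i = Suc j" if "i < length xs" "j < length xs" for i j
  proof
    assume "\<exists>t. Suc t < length xs \<and> {xs ! t, xs ! Suc t} = {xs ! i, xs ! j}"
    then show "j = Suc i \<or> i = Suc j"
      using that assms(1) by (auto simp: doubleton_eq_iff nth_eq_iff_index_eq)
  next
    assume "j = Suc i \<or> i = Suc j"
    then show "\<exists>t. Suc t < length xs \<and> {xs ! t, xs ! Suc t} = {xs ! i, xs ! j}"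
      using that by (metis insert_commute)
  qed
  have "path_order V E xs \<longleftrightarrow>
      (\<forall>u\<in>set xs. \<forall>v\<in>set xs. E u v \<longleftrightarrow> (\<exists>t. Suc t < length xs \<and> {xs ! t, xs ! Suc t} = {u, v}))"
    using assms by (simp add: path_order_def)
  also have "\<dots> \<longleftrightarrow> (\<forall>i<length xs. \<forall>j<length xs. E (xs ! i) (xs ! j) \<longleftrightarrow>
      (\<exists>t. Suc t < length xs \<and> {xs ! t, xs ! Suc t} = {xs ! i, xs ! j}))"
    by (simp only: all_set_conv_all_nth)
  also have "\<dots> \<longleftrightarrow> (\<forall>i<length xs. \<forall>j<length xs. E (xs ! i) (xs ! j) \<longleftrightarrow> j = Suc i \<or> i = Suc j)"
    using consecutive by simp
  finally show ?thesis .
qed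

lemma path_order_length: "path_order V E xs \<Longrightarrow> length xs = card V"
  unfolding path_order_def using distinct_card by metis

lemma path_order_adj:
  assumes "path_order V E xs" "i < length xs" "j < length xs"
  shows "E (xs ! i) (xs ! j) \<longleftrightarrow> j = Suc i \<or> i = Suc j"
proof -
  have "distinct xs" "set xs = V" using assms(1) by (simp_all add: path_order_def)
  then have "\<forall>i<length xs. \<forall>j<length xs. E (xs ! i) (xs ! j) \<longleftrightarrow> j = Suc i \<or> i = Suc j"
    using path_order_iff_adj assms(1) by blast
  then show ?thesis using assms(2,3) by blast
qed

lemma path_order_simple_path:
  assumes "path_order V E xs" "xs \<noteq> []"
  shows "simple_path V E xs"
proof -
  have "E (xs ! i) (xs ! Suc i)" if "Suc i < length xs" for i
    using path_order_adj[OF assms(1), of i "Suc i"] that by simp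
  then show ?thesis using assms by (auto simp: simple_path_def walk_iff_nth path_order_def)
qed

lemma path_order_of_spanning_simple_path:
  assumes T: "is_tree V E" and P: "simple_path V E P" and spanning: "set P = V"
  shows "path_order V E P"
proof -
  have G: "simple_graph V E" using T by (simp add: is_tree_def)
  have "E (P ! i) (P ! j) \<longleftrightarrow> j = Suc i \<or> i = Suc j" if "i < length P" "j < length P" for i j
  proof
    assume edge: "E (P ! i) (P ! j)"
    then have "i \<noteq> j" using simple_graph_irrefl[OF G] by metis
    then consider "i < j" | "j < i" by linarith
    then show "j = Suc i \<or> i = Suc j"
    proof cases
      case 1
      then show ?thesis using tree_simple_path_no_chord[OF T P 1 that(2) edge] by simp
    next
      case 2
      then show ?thesis
        using tree_simple_path_no_chord[OF T P 2 that(1) simple_graph_sym[OF G edge]] by simp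
    qed
  next
    assume "j = Suc i \<or> i = Suc j"
    then show "E (P ! i) (P ! j)"
      using P that simple_graph_sym[OF G] by (auto simp: simple_path_def walk_iff_nth)
  qed
  moreover have "distinct P" using P by (simp add: simple_path_def)
  ultimately show ?thesis using path_order_iff_adj[of P V E] spanning by simp
qed

lemma path_order_degree:
  assumes xs: "path_order V E xs" and i: "i < length xs" and two: "2 \<le> length xs"
  shows "degree V E (xs ! i) = (if i = 0 \<or> i = length xs - 1 then 1 else 2)"
proof -
  let ?J = "{j. j < length xs \<and> (j = Suc i \<or> i = Suc j)}"
  have V: "V = (!) xs ` {..<length xs}" and "distinct xs"
    using xs by (auto simp: path_order_def set_conv_nth)
  have "{y \<in> V. E (xs ! i) y} = (!) xs ` {j. j < length xs \<and> E (xs ! i) (xs ! j)}"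
    unfolding V by blast
  also have "{j. j < length xs \<and> E (xs ! i) (xs ! j)} = ?J"
    using path_order_adj[OF xs i] by blast
  finally have neighbours: "{y \<in> V. E (xs ! i) y} = (!) xs ` ?J" .
  have "inj_on ((!) xs) ?J" using inj_on_nth[OF \<open>distinct xs\<close>] by simp
  then have "degree V E (xs ! i) = card ?J" unfolding degree_def neighbours by (rule card_image)
  moreover have "?J = (if i = 0 then {1} else if i = length xs - 1 then {i - 1} else {i - 1, Suc i})"
    using i two by auto
  ultimately show ?thesis using i by auto
qed

lemma path_order_edges:
  assumes xs: "path_order V E xs"
  shows "edges V E = (\<lambda>i. {xs ! i, xs ! Suc i}) ` {..<length xs - 1}"
    and "inj_on (\<lambda>i. {xs ! i, xs ! Suc i}) {..<length xs - 1}"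
proof -
  have d: "distinct xs" and s: "set xs = V" using xs by (simp_all add: path_order_def)
  show "edges V E = (\<lambda>i. {xs ! i, xs ! Suc i}) ` {..<length xs - 1}"
  proof (intro equalityI subsetI)
    fix e assume "e \<in> edges V E"
    then obtain u v where uv: "e = {u, v}" "u \<in> V" "v \<in> V" "E u v" unfolding edges_def by blast
    then obtain i where "Suc i < length xs" "{xs ! i, xs ! Suc i} = {u, v}"
      using xs unfolding path_order_def by blast
    then show "e \<in> (\<lambda>i. {xs ! i, xs ! Suc i}) ` {..<length xs - 1}" using uv by force
  next
    fix e assume "e \<in> (\<lambda>i. {xs ! i, xs ! Suc i}) ` {..<length xs - 1}"
    then obtain i where "i < length xs - 1" and e: "e = {xs ! i, xs ! Suc i}" by blast
    then have i: "Suc i < length xs" by linarith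
    then have "E (xs ! i) (xs ! Suc i)" using path_order_adj[OF xs, of i "Suc i"] by simp
    moreover have "xs ! i \<in> V" "xs ! Suc i \<in> V" using i s by auto
    ultimately show "e \<in> edges V E" unfolding edges_def e by blast
  qed
  show "inj_on (\<lambda>i. {xs ! i, xs ! Suc i}) {..<length xs - 1}"
  proof (rule inj_onI)
    fix i j assume ij: "i \<in> {..<length xs - 1}" "j \<in> {..<length xs - 1}"
      "{xs ! i, xs ! Suc i} = {xs ! j, xs ! Suc j}"
    then have "xs ! i = xs ! j \<or> xs ! i = xs ! Suc j \<and> xs ! Suc i = xs ! j"
      by (auto simp: doubleton_eq_iff)
    then show "i = j" using d ij(1,2) by (auto simp: nth_eq_iff_index_eq)
  qed
qed

lemma randic_path_order:
  assumes xs: "path_order V E xs" and two: "2 \<le> length xs"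
  shows "randic V E = (if length xs = 2 then 1 else sqrt 2 + (real (length xs) - 3) / 2)"
proof -
  let ?n = "length xs"
  define d where "d i = (if i = 0 \<or> i = ?n - 1 then 1 else 2 :: real)" for i
  have degree: "real (degree V E (xs ! i)) = d i" if "i < ?n" for i
    using path_order_degree[OF xs that two] unfolding d_def by simp
  have "randic V E = (\<Sum>i<?n - 1. 1 / sqrt (\<Prod>x\<in>{xs ! i, xs ! Suc i}. real (degree V E x)))"
    unfolding randic_def path_order_edges(1)[OF xs]
    by (rule sum.reindex_cong[OF path_order_edges(2)[OF xs]]) auto
  also have "\<dots> = (\<Sum>i<?n - 1. 1 / sqrt (d i * d (Suc i)))"
  proof (rule sum.cong)
    fix i assume "i \<in> {..<?n - 1}"
    then have i: "Suc i < ?n" by simp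
    then have "xs ! i \<noteq> xs ! Suc i" using xs by (simp add: path_order_def nth_eq_iff_index_eq)
    then show "1 / sqrt (\<Prod>x\<in>{xs ! i, xs ! Suc i}. real (degree V E x)) = 1 / sqrt (d i * d (Suc i))"
      using degree[of i] degree[of "Suc i"] i by simp
  qed simp
  finally have R: "randic V E = (\<Sum>i<?n - 1. 1 / sqrt (d i * d (Suc i)))" .
  show ?thesis
  proof (cases "?n = 2")
    case True
    then show ?thesis using R unfolding d_def by simp
  next
    case False
    then have three: "3 \<le> ?n" using two by simp
    have split: "{..<?n - 1} = insert 0 (insert (?n - 2) {1..<?n - 2})" using three by auto
    have "(\<Sum>i\<in>{1..<?n - 2}. 1 / sqrt (d i * d (Suc i))) = (\<Sum>i\<in>{1..<?n - 2}. 1 / 2)"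
      by (rule sum.cong) (auto simp: d_def)
    also have "\<dots> = (real ?n - 3) / 2" using three by (simp add: of_nat_diff)
    finally have middle: "(\<Sum>i\<in>{1..<?n - 2}. 1 / sqrt (d i * d (Suc i))) = (real ?n - 3) / 2" .
    have ends: "d 0 * d 1 = 2" "d (?n - 2) * d (Suc (?n - 2)) = 2" using three unfolding d_def by auto
    have "randic V E = 2 / sqrt 2 + (real ?n - 3) / 2"
      using R middle ends three unfolding split by (simp add: sum.insert)
    then show ?thesis using False by (simp add: real_div_sqrt)
  qed
qed

section \<open>Radius\<close>

lemma dist_le_eccentricity: "finite V \<Longrightarrow> x \<in> V \<Longrightarrow> dist V E c x \<le> eccentricity V E c"
  unfolding eccentricity_def by simp

lemma eccentricity_le:
  "finite V \<Longrightarrow> V \<noteq> {} \<Longrightarrow> (\<And>x. x \<in> V \<Longrightarrow> dist V E c x \<le> k) \<Longrightarrow> eccentricity V E c \<le> k"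
  unfolding eccentricity_def by simp

lemma radius_le_eccentricity: "finite V \<Longrightarrow> c \<in> V \<Longrightarrow> radius V E \<le> eccentricity V E c"
  unfolding radius_def by simp

lemma dist_le_two_radius:
  assumes G: "simple_graph V E" "connected_graph V E" and "a \<in> V" "b \<in> V"
  shows "dist V E a b \<le> 2 * radius V E"
proof -
  have fin: "finite V" using G(1) by (rule simple_graph_finite)
  have "radius V E \<in> eccentricity V E ` V"
    unfolding radius_def using fin assms(3) by (intro Min_in) auto
  then obtain c where c: "c \<in> V" "radius V E = eccentricity V E c" by auto
  have "dist V E a b \<le> dist V E a c + dist V E c b" using dist_triangle[OF G(2) assms(3) c(1) assms(4)] .
  also have "dist V E a c = dist V E c a" using dist_sym[OF G assms(3) c(1)] .
  finally have "dist V E a b \<le> dist V E c a + dist V E c b" .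
  moreover have "dist V E c a \<le> radius V E" "dist V E c b \<le> radius V E"
    using dist_le_eccentricity[OF fin] assms(3,4) c(2) by simp_all
  ultimately show ?thesis by linarith
qed

definition longest_simple_path :: "'a set \<Rightarrow> ('a \<Rightarrow> 'a \<Rightarrow> bool) \<Rightarrow> 'a list \<Rightarrow> bool" where
  "longest_simple_path V E P \<longleftrightarrow> simple_path V E P \<and> (\<forall>Q. simple_path V E Q \<longrightarrow> length Q \<le> length P)"

lemma longest_simple_path_exists:
  assumes "finite V" "V \<noteq> {}"
  obtains P where "longest_simple_path V E P"
proof -
  obtain x where "x \<in> V" using assms(2) by blast
  then have "simple_path V E [x]" by (simp add: simple_path_def)
  moreover have "\<forall>Q. simple_path V E Q \<longrightarrow> length Q < Suc (card V)"
    using simple_path_length_le_card[OF assms(1)] by (simp add: less_Suc_eq_le)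
  ultimately show ?thesis
    using ex_has_greatest_nat[of "simple_path V E" "[x]" length] that
    unfolding longest_simple_path_def by blast
qed

text \<open>The detour from x to the first vertex P ! j of P, followed by either end of P, is a simple
  path and hence no longer than P.\<close>

lemma longest_simple_path_near:
  assumes G: "simple_graph V E" "connected_graph V E"
    and P: "longest_simple_path V E P" and x: "x \<in> V"
  obtains j where "j < length P" "dist V E (P ! j) x \<le> j" "dist V E (P ! j) x + j < length P"
proof -
  have sP: "simple_path V E P" and longest: "\<And>Q. simple_path V E Q \<Longrightarrow> length Q \<le> length P"
    using P by (auto simp: longest_simple_path_def)
  have a: "hd P \<in> V" "hd P \<in> set P" using sP by (auto simp: simple_path_def)
  obtain Q where Q: "simple_path V E Q" "hd Q = x" "last Q = hd P"
    using shortest_simple_path[OF connected_graph_rtrancl[OF G(2) x a(1)] x] by metis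
  have "\<exists>v\<in>set Q. v \<in> set P" using Q a(2) by (metis last_in_set simple_path_def)
  then obtain Q1 z Q2 where Qs: "Q = Q1 @ z # Q2" "z \<in> set P" and off: "\<forall>v\<in>set Q1. v \<notin> set P"
    using split_list_first_prop[of Q "\<lambda>v. v \<in> set P"] by blast
  obtain j where j: "j < length P" "P ! j = z" using Qs(2) by (metis in_set_conv_nth)
  have Qz: "simple_path V E (Q1 @ [z])"
    using simple_path_take[OF Q(1), of "Suc (length Q1)"] Qs(1) by simp
  have "dist V E z x \<le> length Q1"
  proof -
    have "dist V E (hd (rev (Q1 @ [z]))) (last (rev (Q1 @ [z]))) \<le> length (rev (Q1 @ [z])) - 1"
      using simple_path_dist_le[OF simple_path_rev[OF G(1) Qz]] .
    moreover have "last (rev (Q1 @ [z])) = x" using Q(2) Qs(1) by (cases Q1) auto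
    ultimately show ?thesis by simp
  qed
  moreover have "length Q1 + Suc j \<le> length P"
  proof -
    have "rev (take (Suc j) P) = z # rev (take j P)" using j by (simp add: take_Suc_conv_app_nth)
    moreover have "simple_path V E (rev (take (Suc j) P))"
      using simple_path_rev[OF G(1) simple_path_take[OF sP]] by simp
    moreover have "set Q1 \<inter> set (rev (take (Suc j) P)) = {}" using off by (auto dest: in_set_takeD)
    ultimately have "simple_path V E (Q1 @ z # rev (take j P))" using simple_path_glue[OF Qz] by metis
    then show ?thesis using longest j(1) by fastforce
  qed
  moreover have "length Q1 + (length P - j) \<le> length P"
  proof -
    have "drop j P = z # drop (Suc j) P" using Cons_nth_drop_Suc[OF j(1)] j(2) by simp
    moreover have "simple_path V E (drop j P)" using simple_path_drop[OF sP j(1)] .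
    moreover have "set Q1 \<inter> set (drop j P) = {}" using off by (auto dest: in_set_dropD)
    ultimately have "simple_path V E (Q1 @ z # drop (Suc j) P)" using simple_path_glue[OF Qz] by metis
    then show ?thesis using longest j(1) by fastforce
  qed
  ultimately show ?thesis using j by (intro that[of j]) auto
qed

lemma two_radius_le_longest_simple_path:
  assumes G: "simple_graph V E" "connected_graph V E" and P: "longest_simple_path V E P"
  shows "2 * radius V E \<le> length P"
proof -
  have "simple_path V E P" using P by (simp add: longest_simple_path_def)
  then have walkP: "walk E P" "set P \<subseteq> V" "P \<noteq> []" by (simp_all add: simple_path_def)
  have fin: "finite V" using G(1) by (rule simple_graph_finite)
  define L where "L = length P - 1"
  define m where "m = L div 2"
  have lenP: "length P = Suc L" using walkP(3) unfolding L_def by simp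
  have m: "m \<le> L - m" "m < length P" unfolding m_def lenP by simp_all
  have mV: "P ! m \<in> V" using m(2) walkP(2) by auto
  have "dist V E (P ! m) x \<le> L - m" if x: "x \<in> V" for x
  proof -
    obtain j where j: "j < length P" "dist V E (P ! j) x \<le> j" "dist V E (P ! j) x + j < length P"
      using longest_simple_path_near[OF G P x] .
    have jV: "P ! j \<in> V" using j(1) walkP(2) by auto
    have "dist V E (P ! m) (P ! j) \<le> (if m \<le> j then j - m else m - j)"
    proof (cases "m \<le> j")
      case True
      then show ?thesis using dist_nth_le[OF walkP(1,2) True j(1)] by simp
    next
      case False
      then show ?thesis using dist_nth_le[OF walkP(1,2) _ m(2), of j] dist_sym[OF G mV jV] by simp
    qed
    moreover have "dist V E (P ! m) x \<le> dist V E (P ! m) (P ! j) + dist V E (P ! j) x"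
      using dist_triangle[OF G(2) mV jV x] .
    ultimately show ?thesis using j m(1) lenP by (auto split: if_splits)
  qed
  then have "eccentricity V E (P ! m) \<le> L - m" using eccentricity_le[OF fin] mV by blast
  moreover have "radius V E \<le> eccentricity V E (P ! m)" using radius_le_eccentricity[OF fin mV] .
  ultimately show ?thesis unfolding m_def lenP by presburger
qed

lemma radius_path_order:
  assumes T: "is_tree V E" and xs: "path_order V E xs"
  shows "radius V E = length xs div 2"
proof -
  have G: "simple_graph V E" "connected_graph V E" and "V \<noteq> {}" using T by (simp_all add: is_tree_def)
  have fin: "finite V" using G(1) by (rule simple_graph_finite)
  have card: "card V = length xs" using path_order_length[OF xs] by simp
  have ne: "xs \<noteq> []" using xs \<open>V \<noteq> {}\<close> by (auto simp: path_order_def)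
  have path: "simple_path V E xs" using path_order_simple_path[OF xs ne] .
  have ends: "hd xs \<in> V" "last xs \<in> V" using path by (auto simp: simple_path_def)
  have "longest_simple_path V E xs"
    using path simple_path_length_le_card[OF fin] card unfolding longest_simple_path_def by auto
  then have "2 * radius V E \<le> length xs" by (rule two_radius_le_longest_simple_path[OF G])
  moreover have "length xs - 1 \<le> 2 * radius V E"
    using tree_dist_simple_path[OF T path] dist_le_two_radius[OF G ends] by simp
  ultimately show ?thesis by presburger
qed

lemma randic_minus_radius_path_graph:
  assumes T: "is_tree V E" and "is_path_graph V E" and two: "2 \<le> card V"
  shows "randic V E - radius V E =
    (if card V = 2 then 0 else if even (card V) then sqrt 2 - 3 / 2 else sqrt 2 - 1)"
proof -
  obtain xs where xs: "path_order V E xs" using assms(2) is_path_graph_iff_path_order by blast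
  have n: "length xs = card V" using path_order_length[OF xs] .
  have R: "randic V E = (if card V = 2 then 1 else sqrt 2 + (real (card V) - 3) / 2)"
    using randic_path_order[OF xs] n two by simp
  have r: "radius V E = card V div 2" using radius_path_order[OF T xs] n by simp
  show ?thesis
  proof (cases "even (card V)")
    case True
    then obtain m where "card V = 2 * m" by blast
    then show ?thesis using R r True by (simp add: field_simps)
  next
    case False
    then obtain m where "card V = 2 * m + 1" using oddE by blast
    then show ?thesis using R r False by (simp add: field_simps)
  qed
qed

lemma path_graph_degree_le_two:
  assumes "is_path_graph V E" "2 \<le> card V" "x \<in> V"
  shows "degree V E x \<le> 2"
proof -
  obtain xs where xs: "path_order V E xs" using assms(1) is_path_graph_iff_path_order by blast
  then obtain i where "i < length xs" "x = xs ! i"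
    using assms(3) by (auto simp: path_order_def in_set_conv_nth)
  moreover have "2 \<le> length xs" using path_order_length[OF xs] assms(2) by simp
  ultimately show ?thesis using path_order_degree[OF xs] by simp
qed

section \<open>Deleting a leaf\<close>

definition del_vertex :: "('a \<Rightarrow> 'a \<Rightarrow> bool) \<Rightarrow> 'a \<Rightarrow> 'a \<Rightarrow> 'a \<Rightarrow> bool" where
  "del_vertex E u x y \<longleftrightarrow> E x y \<and> x \<noteq> u \<and> y \<noteq> u"

lemma simple_graph_del_vertex: "simple_graph V E \<Longrightarrow> simple_graph (V - {u}) (del_vertex E u)"
  by (auto simp: simple_graph_def del_vertex_def)

lemma walk_del_vertex: "walk E xs \<Longrightarrow> u \<notin> set xs \<Longrightarrow> walk (del_vertex E u) xs"
  by (induction E xs rule: walk.induct) (auto simp: del_vertex_def)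

lemma leaf_neighbour:
  assumes G: "simple_graph V E" and leaf: "{y \<in> V. E u y} = {w}"
  shows "w \<in> V" "E u w" "E w u" "w \<noteq> u" "\<And>x. x \<in> V \<Longrightarrow> E x u \<Longrightarrow> x = w"
proof -
  show w: "w \<in> V" "E u w" using leaf by blast+
  then show "E w u" using simple_graph_sym[OF G] by blast
  show "w \<noteq> u" using w(2) simple_graph_irrefl[OF G] by metis
  show "x = w" if "x \<in> V" "E x u" for x using that leaf simple_graph_sym[OF G] by blast
qed

lemma simple_path_avoids_leaf:
  assumes G: "simple_graph V E" and leaf: "{y \<in> V. E u y} = {w}"
    and P: "simple_path V E P" and ends: "hd P \<noteq> u" "last P \<noteq> u"
  shows "u \<notin> set P"
proof
  assume "u \<in> set P"
  then obtain i where i: "i < length P" "P ! i = u" by (metis in_set_conv_nth)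
  have P': "P \<noteq> []" "walk E P" "distinct P" "set P \<subseteq> V" using P by (auto simp: simple_path_def)
  have step: "E (P ! k) (P ! Suc k)" if "Suc k < length P" for k
    using P'(2) that unfolding walk_iff_nth by blast
  have "0 < i" using i ends(1) P'(1) by (metis hd_conv_nth gr0I)
  moreover have "Suc i < length P" using i ends(2) P'(1) by (metis last_conv_nth Suc_lessI diff_Suc_1)
  ultimately have "E (P ! (i - 1)) u" "E u (P ! Suc i)" using step[of "i - 1"] step[of i] i by simp_all
  moreover have "P ! (i - 1) \<in> V" "P ! Suc i \<in> V" using P'(4) \<open>Suc i < length P\<close> by auto
  ultimately have "P ! (i - 1) = w" "P ! Suc i = w"
    using leaf_neighbour(5)[OF G leaf] leaf by blast+
  then have "P ! (i - 1) = P ! Suc i" by simp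
  moreover have "i - 1 < length P" using \<open>Suc i < length P\<close> by simp
  ultimately have "i - 1 = Suc i" using nth_eq_iff_index_eq[OF P'(3)] \<open>Suc i < length P\<close> by blast
  then show False by simp
qed

lemma has_cycle_del_vertex: "has_cycle (V - {u}) (del_vertex E u) \<Longrightarrow> has_cycle V E"
proof -
  assume "has_cycle (V - {u}) (del_vertex E u)"
  then obtain xs where xs: "3 \<le> length xs" "distinct xs" "set xs \<subseteq> V - {u}"
    "walk (del_vertex E u) xs" "del_vertex E u (last xs) (hd xs)"
    unfolding has_cycle_iff_walk by blast
  moreover have "walk E xs" using walk_mono[OF xs(4)] by (simp add: del_vertex_def)
  moreover have "set xs \<subseteq> V" "E (last xs) (hd xs)" using xs(3,5) by (auto simp: del_vertex_def)
  ultimately show ?thesis unfolding has_cycle_iff_walk by blast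
qed

lemma is_tree_del_leaf:
  assumes T: "is_tree V E" and leaf: "{y \<in> V. E u y} = {w}"
  shows "is_tree (V - {u}) (del_vertex E u)"
proof -
  have G: "simple_graph V E" "connected_graph V E" "\<not> has_cycle V E"
    using T by (simp_all add: is_tree_def)
  have "(x, y) \<in> (adj_rel (V - {u}) (del_vertex E u))\<^sup>*" if xy: "x \<in> V - {u}" "y \<in> V - {u}" for x y
  proof -
    have V: "x \<in> V" "y \<in> V" using xy by simp_all
    obtain P where P: "simple_path V E P" "hd P = x" "last P = y"
      using shortest_simple_path[OF connected_graph_rtrancl[OF G(2) V] V(1)] by blast
    have off: "u \<notin> set P" using simple_path_avoids_leaf[OF G(1) leaf P(1)] xy P(2,3) by simp
    have "walk E P" "P \<noteq> []" "set P \<subseteq> V" using P(1) by (simp_all add: simple_path_def)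
    then have "walk (del_vertex E u) P" "P \<noteq> []" "set P \<subseteq> V - {u}"
      using walk_del_vertex[of E P u] off by auto
    then have "(hd P, last P) \<in> adj_rel (V - {u}) (del_vertex E u) ^^ (length P - 1)"
      by (rule relpow_of_walk)
    then have "(x, y) \<in> adj_rel (V - {u}) (del_vertex E u) ^^ (length P - 1)" using P(2,3) by simp
    then show ?thesis by (rule relpow_imp_rtrancl)
  qed
  then have "connected_graph (V - {u}) (del_vertex E u)" by (simp add: connected_graph_def)
  moreover have "V - {u} \<noteq> {}" using leaf_neighbour(1,4)[OF G(1) leaf] by blast
  moreover have "\<not> has_cycle (V - {u}) (del_vertex E u)" using G(3) has_cycle_del_vertex[of V u E] by blast
  ultimately show ?thesis using simple_graph_del_vertex[OF G(1)] by (simp add: is_tree_def)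
qed

lemma radius_le_radius_del_leaf:
  assumes T: "is_tree V E" and leaf: "{y \<in> V. E u y} = {w}"
    and P: "longest_simple_path V E P" and off: "u \<notin> set P"
  shows "radius V E \<le> radius (V - {u}) (del_vertex E u)"
proof -
  have G: "simple_graph V E" "connected_graph V E" using T by (simp_all add: is_tree_def)
  have G': "simple_graph (V - {u}) (del_vertex E u)" "connected_graph (V - {u}) (del_vertex E u)"
    using is_tree_del_leaf[OF T leaf] by (simp_all add: is_tree_def)
  have sP: "simple_path V E P" using P by (simp add: longest_simple_path_def)
  have ends: "hd P \<in> V - {u}" "last P \<in> V - {u}" using sP off by (auto simp: simple_path_def)
  have "length P - 1 = dist V E (hd P) (last P)" using tree_dist_simple_path[OF T sP] by simp
  also have "\<dots> \<le> dist (V - {u}) (del_vertex E u) (hd P) (last P)"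
    by (rule dist_le_dist_subgraph[OF _ _ connected_graph_rtrancl[OF G'(2) ends] ends(1)])
      (auto simp: del_vertex_def)
  also have "\<dots> \<le> 2 * radius (V - {u}) (del_vertex E u)" using dist_le_two_radius[OF G' ends] .
  finally have "length P - 1 \<le> 2 * radius (V - {u}) (del_vertex E u)" .
  moreover have "2 * radius V E \<le> length P" using two_radius_le_longest_simple_path[OF G P] .
  ultimately show ?thesis by presburger
qed

text \<open>
  A second neighbour y of u would be one step farther from hd P than u: off P this contradicts
  the choice of u, and on P the path along P to y and on to u makes u one step farther than y.
\<close>

lemma farthest_vertex_off_path_is_leaf:
  assumes T: "is_tree V E" and P: "simple_path V E P" and u: "u \<in> V" "u \<notin> set P"
    and farthest: "\<And>v. v \<in> V \<Longrightarrow> v \<notin> set P \<Longrightarrow> dist V E (hd P) v \<le> dist V E (hd P) u"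
  obtains w where "{y \<in> V. E u y} = {w}"
proof -
  have G: "simple_graph V E" "connected_graph V E" using T by (simp_all add: is_tree_def)
  have a: "hd P \<in> V" "hd P \<in> set P" "P \<noteq> []" using P by (auto simp: simple_path_def)
  obtain R where R: "simple_path V E R" "length R = Suc (dist V E (hd P) u)" "hd R = hd P" "last R = u"
    using shortest_simple_path[OF connected_graph_rtrancl[OF G(2) a(1) u(1)] a(1)] .
  have two: "2 \<le> length R"
  proof (rule ccontr)
    assume "\<not> 2 \<le> length R"
    then have "length R = 1" using R(2) by simp
    then obtain r where "R = [r]" by (auto simp: length_Suc_conv)
    then show False using R(3,4) a(2) u(2) by simp
  qed
  define n where "n = length R - 2"
  have n: "length R = Suc (Suc n)" using two unfolding n_def by simp
  have "R \<noteq> []" using n by auto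
  then have Ru: "R ! Suc n = u" using R(4) n last_conv_nth[of R] by simp
  define w where "w = R ! n"
  have walkR: "E (R ! i) (R ! Suc i)" if "Suc i < length R" for i
    using R(1) that unfolding simple_path_def walk_iff_nth by blast
  have "E w u" using walkR[of n] n Ru unfolding w_def by simp
  have "y = w" if y: "y \<in> V" "E u y" for y
  proof (rule ccontr)
    assume "y \<noteq> w"
    have "y \<notin> set R"
    proof
      assume "y \<in> set R"
      then obtain i where i: "i < length R" "R ! i = y" by (metis in_set_conv_nth)
      have "y \<noteq> u" using y(2) simple_graph_irrefl[OF G(1)] by metis
      then have "i < Suc n" using i Ru n by (metis less_antisym)
      moreover have "E (R ! i) (R ! Suc n)" using i(2) Ru simple_graph_sym[OF G(1) y(2)] by simp
      ultimately have "Suc n = Suc i" using tree_simple_path_no_chord[OF T R(1)] n by simp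
      then show False using \<open>y \<noteq> w\<close> i(2) unfolding w_def by simp
    qed
    then have "simple_path V E (R @ [y])" using simple_path_snoc[OF R(1) y(1)] y(2) R(4) by simp
    then have "dist V E (hd (R @ [y])) (last (R @ [y])) = length (R @ [y]) - 1"
      by (rule tree_dist_simple_path[OF T])
    then have dy: "dist V E (hd P) y = Suc (dist V E (hd P) u)" using R \<open>R \<noteq> []\<close> by simp
    show False
    proof (cases "y \<in> set P")
      case False
      then show ?thesis using farthest[OF y(1) False] dy by simp
    next
      case True
      then obtain j where j: "j < length P" "P ! j = y" by (metis in_set_conv_nth)
      have dj: "dist V E (hd P) y = j" using tree_dist_nth[OF T P, of 0 j] j a(3) by (simp add: hd_conv_nth)
      have "u \<notin> set (take (Suc j) P)" using u(2) by (auto dest: in_set_takeD)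
      moreover have "last (take (Suc j) P) = y" using j by (simp add: take_Suc_conv_app_nth)
      ultimately have "simple_path V E (take (Suc j) P @ [u])"
        using simple_path_snoc[OF simple_path_take[OF P, of "Suc j"] u(1)]
          simple_graph_sym[OF G(1) y(2)] by simp
      then have "dist V E (hd (take (Suc j) P @ [u])) (last (take (Suc j) P @ [u]))
          = length (take (Suc j) P @ [u]) - 1"
        by (rule tree_dist_simple_path[OF T])
      then have "dist V E (hd P) u = Suc j" using j(1) a(3) by simp
      then show False using dy dj by simp
    qed
  qed
  moreover have "w \<in> V" using R(1) n unfolding w_def simple_path_def by auto
  ultimately have "{y \<in> V. E u y} = {w}" using \<open>E w u\<close> simple_graph_sym[OF G(1)] by blast
  then show ?thesis by (rule that)
qed

lemma non_path_tree_has_removable_leaf: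
  assumes T: "is_tree V E" and not_path: "\<not> is_path_graph V E"
  obtains u w where "u \<in> V" "{y \<in> V. E u y} = {w}" "3 \<le> card V"
    "radius V E \<le> radius (V - {u}) (del_vertex E u)"
proof -
  have G: "simple_graph V E" and "V \<noteq> {}" using T by (simp_all add: is_tree_def)
  have fin: "finite V" using G by (rule simple_graph_finite)
  obtain P where P: "longest_simple_path V E P" using longest_simple_path_exists[OF fin \<open>V \<noteq> {}\<close>] .
  have sP: "simple_path V E P" using P by (simp add: longest_simple_path_def)
  have "set P \<noteq> V"
    using path_order_of_spanning_simple_path[OF T sP] not_path is_path_graph_iff_path_order by blast
  then have off: "V - set P \<noteq> {}" using sP by (auto simp: simple_path_def)
  have "Max (dist V E (hd P) ` (V - set P)) \<in> dist V E (hd P) ` (V - set P)"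
    using fin off by (intro Max_in) auto
  then obtain u where u: "u \<in> V - set P" "dist V E (hd P) u = Max (dist V E (hd P) ` (V - set P))"
    by auto
  have "dist V E (hd P) v \<le> dist V E (hd P) u" if "v \<in> V" "v \<notin> set P" for v
    using u(2) fin that by simp
  then obtain w where leaf: "{y \<in> V. E u y} = {w}"
    using farthest_vertex_off_path_is_leaf[OF T sP] u(1) by blast
  have "simple_path V E [u, w]" using simple_path_edge[OF G leaf_neighbour(2)[OF G leaf]] .
  then have "2 \<le> length P" using P by (fastforce simp: longest_simple_path_def)
  moreover have "card (insert u (set P)) \<le> card V" using fin u(1) sP by (intro card_mono) (auto simp: simple_path_def)
  moreover have "card (insert u (set P)) = Suc (length P)"
    using u(1) sP by (simp add: simple_path_def distinct_card)
  ultimately have "3 \<le> card V" by simp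
  then show ?thesis using that u(1) leaf radius_le_radius_del_leaf[OF T leaf P] by blast
qed
section \<open>The Randic index under deletion of a leaf\<close>

lemma finite_edges: "finite V \<Longrightarrow> finite (edges V E)"
  by (rule finite_subset[of _ "Pow V"]) (auto simp: edges_def)

lemma randic_split_at_vertex:
  assumes G: "simple_graph V E"
  shows "randic V E = (\<Sum>y\<in>{y \<in> V. E w y}. 1 / sqrt (real (degree V E w) * real (degree V E y)))
    + (\<Sum>e\<in>{e \<in> edges V E. w \<notin> e}. 1 / sqrt (\<Prod>x\<in>e. real (degree V E x)))"
proof -
  let ?f = "\<lambda>e. 1 / sqrt (\<Prod>x\<in>e. real (degree V E x))"
  let ?N = "{y \<in> V. E w y}"
  have fin: "finite (edges V E)" using finite_edges[OF simple_graph_finite[OF G]] .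
  have at_w: "{e \<in> edges V E. w \<in> e} = (\<lambda>y. {w, y}) ` ?N"
  proof (intro equalityI subsetI)
    fix e assume "e \<in> {e \<in> edges V E. w \<in> e}"
    then obtain x y where e: "e = {x, y}" "x \<in> V" "y \<in> V" "E x y" "w \<in> e"
      unfolding edges_def by blast
    then consider "w = x" | "w = y" by blast
    then show "e \<in> (\<lambda>y. {w, y}) ` ?N"
    proof cases
      case 1
      then show ?thesis using e by blast
    next
      case 2
      then have "E w x" using e(4) simple_graph_sym[OF G] by blast
      then show ?thesis using e 2 by (auto simp: insert_commute)
    qed
  next
    fix e assume "e \<in> (\<lambda>y. {w, y}) ` ?N"
    then obtain y where "y \<in> ?N" "e = {w, y}" by blast
    then show "e \<in> {e \<in> edges V E. w \<in> e}"
      unfolding edges_def using simple_graph_vertices[OF G] by blast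
  qed
  have inj: "inj_on (\<lambda>y. {w, y}) ?N"
    using simple_graph_irrefl[OF G] by (auto simp: inj_on_def doubleton_eq_iff)
  have "randic V E = sum ?f ({e \<in> edges V E. w \<in> e} \<union> {e \<in> edges V E. w \<notin> e})"
    unfolding randic_def by (rule arg_cong[where f = "sum ?f"]) blast
  also have "\<dots> = sum ?f {e \<in> edges V E. w \<in> e} + sum ?f {e \<in> edges V E. w \<notin> e}"
    using fin by (intro sum.union_disjoint) auto
  also have "sum ?f {e \<in> edges V E. w \<in> e} = (\<Sum>y\<in>?N. ?f {w, y})"
    unfolding at_w using sum.reindex[OF inj, of ?f] by (simp add: o_def)
  also have "\<dots> = (\<Sum>y\<in>?N. 1 / sqrt (real (degree V E w) * real (degree V E y)))"
  proof (rule sum.cong[OF refl])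
    fix y assume "y \<in> ?N"
    then have "y \<noteq> w" using simple_graph_irrefl[OF G] by auto
    then show "?f {w, y} = 1 / sqrt (real (degree V E w) * real (degree V E y))" by simp
  qed
  finally show ?thesis .
qed

lemma neighbours_del_leaf:
  assumes G: "simple_graph V E" and u: "u \<in> V" and leaf: "{y \<in> V. E u y} = {w}"
  shows "{y \<in> V. E w y} = insert u {y \<in> V - {u}. del_vertex E u w y}"
  using leaf_neighbour(3,4)[OF G leaf] u by (auto simp: del_vertex_def)

lemma degree_del_leaf:
  assumes G: "simple_graph V E" and u: "u \<in> V" and leaf: "{y \<in> V. E u y} = {w}"
  shows "degree V E w = Suc (degree (V - {u}) (del_vertex E u) w)"
    and "x \<in> V - {u} \<Longrightarrow> x \<noteq> w \<Longrightarrow> degree (V - {u}) (del_vertex E u) x = degree V E x"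
    and "degree V E u = 1"
proof -
  have fin: "finite V" using G by (rule simple_graph_finite)
  show "degree V E w = Suc (degree (V - {u}) (del_vertex E u) w)"
    unfolding degree_def neighbours_del_leaf[OF G u leaf] using fin by simp
  show "degree (V - {u}) (del_vertex E u) x = degree V E x" if "x \<in> V - {u}" "x \<noteq> w"
  proof -
    have "{y \<in> V - {u}. del_vertex E u x y} = {y \<in> V. E x y}"
      using that leaf_neighbour(5)[OF G leaf] simple_graph_sym[OF G] by (auto simp: del_vertex_def)
    then show ?thesis unfolding degree_def by simp
  qed
  show "degree V E u = 1" unfolding degree_def leaf by simp
qed

lemma edges_avoiding_del_leaf:
  assumes G: "simple_graph V E" and leaf: "{y \<in> V. E u y} = {w}"
  shows "{e \<in> edges V E. w \<notin> e} = {e \<in> edges (V - {u}) (del_vertex E u). w \<notin> e}"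
proof (intro equalityI subsetI)
  fix e assume "e \<in> {e \<in> edges V E. w \<notin> e}"
  then obtain x y where e: "e = {x, y}" "x \<in> V" "y \<in> V" "E x y" "w \<notin> e"
    unfolding edges_def by blast
  have "x \<noteq> u"
  proof
    assume "x = u"
    then have "y \<in> {y \<in> V. E u y}" using e(3,4) by simp
    then show False using leaf e(1,5) by simp
  qed
  moreover have "y \<noteq> u" using e leaf_neighbour(5)[OF G leaf, of x] by auto
  ultimately show "e \<in> {e \<in> edges (V - {u}) (del_vertex E u). w \<notin> e}"
    using e unfolding edges_def del_vertex_def by blast
next
  fix e assume "e \<in> {e \<in> edges (V - {u}) (del_vertex E u). w \<notin> e}"
  then show "e \<in> {e \<in> edges V E. w \<notin> e}" unfolding edges_def del_vertex_def by blast
qed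

lemma randic_del_leaf:
  assumes G: "simple_graph V E" and u: "u \<in> V" and leaf: "{y \<in> V. E u y} = {w}"
  defines "V' \<equiv> V - {u}" and "E' \<equiv> del_vertex E u"
  defines "k \<equiv> real (degree V' E' w)"
  shows "randic V E - randic V' E' = 1 / sqrt (k + 1)
    + (\<Sum>y\<in>{y \<in> V'. E' w y}. 1 / sqrt ((k + 1) * degree V' E' y) - 1 / sqrt (k * degree V' E' y))"
proof -
  let ?N = "{y \<in> V'. E' w y}"
  let ?rest = "\<lambda>V E. \<Sum>e\<in>{e \<in> edges V E. w \<notin> e}. 1 / sqrt (\<Prod>x\<in>e. real (degree V E x))"
  have G': "simple_graph V' E'" unfolding V'_def E'_def by (rule simple_graph_del_vertex[OF G])
  have fin: "finite ?N" using simple_graph_finite[OF G'] by simp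
  have dw: "real (degree V E w) = k + 1"
    using degree_del_leaf(1)[OF G u leaf] unfolding k_def V'_def E'_def by simp
  have dN: "degree V E y = degree V' E' y" if "y \<in> ?N" for y
  proof -
    have "y \<noteq> w" using that simple_graph_irrefl[OF G', of w] by auto
    then show ?thesis using degree_del_leaf(2)[OF G u leaf, of y] that unfolding V'_def E'_def by simp
  qed
  have rest: "?rest V E = ?rest V' E'"
  proof -
    have "?rest V E = (\<Sum>e\<in>{e \<in> edges V' E'. w \<notin> e}. 1 / sqrt (\<Prod>x\<in>e. real (degree V E x)))"
      using edges_avoiding_del_leaf[OF G leaf] unfolding V'_def E'_def by simp
    also have "\<dots> = ?rest V' E'"
    proof (rule sum.cong[OF refl])
      fix e assume "e \<in> {e \<in> edges V' E'. w \<notin> e}"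
      then have "e \<subseteq> V'" "w \<notin> e" unfolding edges_def by auto
      then have "(\<Prod>x\<in>e. real (degree V E x)) = (\<Prod>x\<in>e. real (degree V' E' x))"
        using degree_del_leaf(2)[OF G u leaf, symmetric] unfolding V'_def E'_def
        by (intro prod.cong) auto
      then show "1 / sqrt (\<Prod>x\<in>e. real (degree V E x)) = 1 / sqrt (\<Prod>x\<in>e. real (degree V' E' x))"
        by simp
    qed
    finally show ?thesis .
  qed
  have "randic V E = (\<Sum>y\<in>insert u ?N. 1 / sqrt ((k + 1) * real (degree V E y))) + ?rest V E"
    using randic_split_at_vertex[OF G, of w] neighbours_del_leaf[OF G u leaf] dw
    unfolding V'_def E'_def by simp
  also have "(\<Sum>y\<in>insert u ?N. 1 / sqrt ((k + 1) * real (degree V E y)))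
      = 1 / sqrt (k + 1) + (\<Sum>y\<in>?N. 1 / sqrt ((k + 1) * real (degree V E y)))"
    using fin degree_del_leaf(3)[OF G u leaf] by (simp add: V'_def)
  also have "(\<Sum>y\<in>?N. 1 / sqrt ((k + 1) * real (degree V E y)))
      = (\<Sum>y\<in>?N. 1 / sqrt ((k + 1) * real (degree V' E' y)))"
    using dN by (intro sum.cong) auto
  finally have "randic V E = 1 / sqrt (k + 1)
      + (\<Sum>y\<in>?N. 1 / sqrt ((k + 1) * real (degree V' E' y))) + ?rest V' E'"
    using rest by simp
  moreover have "randic V' E' = (\<Sum>y\<in>?N. 1 / sqrt (k * real (degree V' E' y))) + ?rest V' E'"
    using randic_split_at_vertex[OF G', of w] unfolding k_def by simp
  ultimately show ?thesis by (simp add: sum_subtractf)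
qed

lemma inv_sqrt_diff_le_mult:
  fixes k t :: real
  assumes "1 \<le> k" "1 \<le> t"
  shows "1 / sqrt (k + 1) - 1 / sqrt k \<le> 1 / sqrt ((k + 1) * t) - 1 / sqrt (k * t)"
proof -
  let ?c = "1 / sqrt (k + 1) - 1 / sqrt k"
  have "?c \<le> 0" using assms(1) by (simp add: divide_simps)
  moreover have "1 \<le> sqrt t" using assms(2) by simp
  ultimately have "?c \<le> ?c / sqrt t" using mult_left_mono_neg[of 1 "sqrt t" ?c] by (simp add: le_divide_eq)
  also have "?c / sqrt t = 1 / sqrt ((k + 1) * t) - 1 / sqrt (k * t)"
    by (simp add: real_sqrt_mult divide_simps)
  finally show ?thesis .
qed

lemma sqrt_succ_diff_eq:
  fixes k :: real
  assumes "0 \<le> k"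
  shows "1 / sqrt (k + 1) + k * (1 / sqrt (k + 1) - 1 / sqrt k) = sqrt (k + 1) - sqrt k"
proof -
  have "1 / sqrt (k + 1) + k * (1 / sqrt (k + 1) - 1 / sqrt k) = (k + 1) / sqrt (k + 1) - k / sqrt k"
    by (simp add: algebra_simps add_divide_distrib)
  also have "\<dots> = sqrt (k + 1) - sqrt k" using assms by (simp add: real_div_sqrt)
  finally show ?thesis .
qed

lemma randic_del_leaf_ge:
  assumes G: "simple_graph V E" and u: "u \<in> V" and leaf: "{y \<in> V. E u y} = {w}"
  defines "k \<equiv> real (degree (V - {u}) (del_vertex E u) w)"
  shows "sqrt (k + 1) - sqrt k \<le> randic V E - randic (V - {u}) (del_vertex E u)"
proof -
  let ?V' = "V - {u}" and ?E' = "del_vertex E u"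
  let ?N = "{y \<in> ?V'. ?E' w y}"
  have G': "simple_graph ?V' ?E'" by (rule simple_graph_del_vertex[OF G])
  have fin: "finite ?V'" using simple_graph_finite[OF G'] .
  have card: "real (card ?N) = k" unfolding k_def degree_def ..
  have "1 / sqrt (k + 1) - 1 / sqrt k
      \<le> 1 / sqrt ((k + 1) * degree ?V' ?E' y) - 1 / sqrt (k * degree ?V' ?E' y)" if y: "y \<in> ?N" for y
  proof (rule inv_sqrt_diff_le_mult)
    have "card ?N \<noteq> 0" using y fin by auto
    then show "1 \<le> k" using card by linarith
    have "w \<in> {z \<in> ?V'. ?E' y z}" using y simple_graph_sym[OF G'] simple_graph_vertices[OF G'] by blast
    then have "card {z \<in> ?V'. ?E' y z} \<noteq> 0" using fin by auto
    then show "1 \<le> real (degree ?V' ?E' y)" unfolding degree_def by linarith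
  qed
  then have "real (card ?N) * (1 / sqrt (k + 1) - 1 / sqrt k)
      \<le> (\<Sum>y\<in>?N. 1 / sqrt ((k + 1) * degree ?V' ?E' y) - 1 / sqrt (k * degree ?V' ?E' y))"
    by (rule sum_bounded_below)
  then have "k * (1 / sqrt (k + 1) - 1 / sqrt k)
      \<le> (\<Sum>y\<in>?N. 1 / sqrt ((k + 1) * degree ?V' ?E' y) - 1 / sqrt (k * degree ?V' ?E' y))"
    by (simp only: card)
  moreover have "1 / sqrt (k + 1) + k * (1 / sqrt (k + 1) - 1 / sqrt k) = sqrt (k + 1) - sqrt k"
    by (rule sqrt_succ_diff_eq) (simp add: k_def)
  ultimately show ?thesis using randic_del_leaf[OF G u leaf, folded k_def] by linarith
qed

lemma randic_minus_radius_path_graph_ge: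
  assumes "is_tree V E" "is_path_graph V E" "2 \<le> card V"
  shows "sqrt 2 - 3 / 2 \<le> randic V E - radius V E"
proof -
  have "sqrt 2 \<le> (3 / 2 :: real)" by (rule real_le_lsqrt) (simp_all add: power2_eq_square)
  then show ?thesis using randic_minus_radius_path_graph[OF assms] by auto
qed

lemma sqrt_succ_diff_ge:
  assumes "k \<le> (2::nat)"
  shows "3 / 2 - sqrt 2 \<le> sqrt (real k + 1) - sqrt (real k)"
proof -
  have "1 / 2 \<le> sqrt (2::real)" "5 / 4 \<le> sqrt (2::real)" "3 / 2 \<le> sqrt (3::real)"
    by (rule real_le_rsqrt; simp add: power2_eq_square)+
  moreover have "k = 0 \<or> k = 1 \<or> k = 2" using assms by auto
  ultimately show ?thesis by auto
qed

lemma radius_le_randic_non_path_tree: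
  assumes "is_tree V E" "\<not> is_path_graph V E"
  shows "real (radius V E) \<le> randic V E"
  using assms
proof (induction "card V" arbitrary: V E rule: less_induct)
  case less
  have T: "is_tree V E" and G: "simple_graph V E" using less.prems by (simp_all add: is_tree_def)
  obtain u w where u: "u \<in> V" and leaf: "{y \<in> V. E u y} = {w}" and three: "3 \<le> card V"
    and radius: "radius V E \<le> radius (V - {u}) (del_vertex E u)"
    using non_path_tree_has_removable_leaf[OF T less.prems(2)] .
  let ?V' = "V - {u}" and ?E' = "del_vertex E u"
  let ?k = "degree ?V' ?E' w"
  have T': "is_tree ?V' ?E'" using is_tree_del_leaf[OF T leaf] .
  have card: "card ?V' = card V - 1" using u simple_graph_finite[OF G] by simp
  have gain: "sqrt (real ?k + 1) - sqrt (real ?k) \<le> randic V E - randic ?V' ?E'"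
    using randic_del_leaf_ge[OF G u leaf] .
  have radius': "real (radius V E) \<le> radius ?V' ?E'" using radius by simp
  show ?case
  proof (cases "is_path_graph ?V' ?E'")
    case True
    have "w \<in> ?V'" using leaf_neighbour(1,4)[OF G leaf] by simp
    then have "?k \<le> 2" using path_graph_degree_le_two[OF True] card three by simp
    then have "3 / 2 - sqrt 2 \<le> sqrt (real ?k + 1) - sqrt (real ?k)" by (rule sqrt_succ_diff_ge)
    moreover have "sqrt 2 - 3 / 2 \<le> randic ?V' ?E' - radius ?V' ?E'"
      using randic_minus_radius_path_graph_ge[OF T' True] card three by simp
    ultimately show ?thesis using gain radius' by linarith
  next
    case False
    have "radius ?V' ?E' \<le> randic ?V' ?E'" using less.hyps[OF _ T' False] card three by simp
    moreover have "0 \<le> sqrt (real ?k + 1) - sqrt (real ?k)" by simp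
    ultimately show ?thesis using gain radius' by linarith
  qed
qed

theorem theorem5p1:
  fixes V :: "'a set" and E :: "'a \<Rightarrow> 'a \<Rightarrow> bool"
  assumes "is_tree V E" and "card V \<ge> 2"
  shows "(is_path_graph V E \<and> even (card V) \<and> card V > 2 \<longrightarrow>
            randic V E - real (radius V E) = sqrt 2 - 3 / 2)
       \<and> (\<not> (is_path_graph V E \<and> even (card V) \<and> card V > 2) \<longrightarrow>
            randic V E - real (radius V E) \<ge> 0)
       \<and> (card V = 2 \<longrightarrow> randic V E - real (radius V E) = 0)"
proof (cases "is_path_graph V E")
  case True
  have "1 \<le> sqrt (2::real)" by simp
  then show ?thesis using randic_minus_radius_path_graph[OF assms(1) True assms(2)] assms(2) True by auto
next
  case False
  obtain u w where "3 \<le> card V" using non_path_tree_has_removable_leaf[OF assms(1) False] .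
  then show ?thesis using radius_le_randic_non_path_tree[OF assms(1) False] False by simp
qed

end
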